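(* Let $G=(V,E)$ with weight $\mu$ be an infinite, connected, locally finite weighted graph satisfying condition $(p_0)$, and let $m>1$. Let $(p,q)\in G_6=\{(p,q): p<m-1-q,\ q<m-1\}\cup\{(m-1,0)\}$. Then the inequality $\Delta_m u+u^p|\nabla u|^q\le 0$ on $V$ admits no nontrivial positive solution (no volume growth assumption is imposed).
   Context: Setting: $G=(V,E)$ is an infinite, connected, locally finite graph with no loops and no multiple edges; $x\sim y$ means $x$ and $y$ are joined by an edge. A weight is a symmetric function $\mu:V\times V\to[0,\infty)$ with $\mu_{xy}=\mu_{yx}>0$ if and only if $x\sim y$; the vertex measure is $\mu(x)=\sum_{y\sim x}\mu_{xy}$. For $m>1$ and $u:V\to\mathbb R$, $\Delta_m u(x)=\frac{1}{\mu(x)}\sum_{y\sim x}\mu_{xy}|u(y)-u(x)|^{m-2}(u(y)-u(x))$ and $|\nabla u(x)|=\big(\sum_{y\sim x}\frac{\mu_{xy}}{2\mu(x)}(u(y)-u(x))^2\big)^{1/2}$. Condition $(p_0)$: there is a constant $p_0>1$ such that $\mu_{xy}/\mu(x)\ge 1/p_0$ for all $x\sim y$. A nontrivial positive solution of $\Delta_m u+u^p|\nabla u|^q\le 0$ is a non-constant function $u:V\to(0,\infty)$ such that $\Delta_m u(x)+u(x)^p|\nabla u(x)|^q\le 0$ for every $x\in V$, with the conventions $0^0=1$, $0^q=0$ for $q>0$, and, for $q<0$, $|\nabla u(x)|^q=+\infty$ when $|\nabla u(x)|=0$ (so the inequality fails at such $x$). *)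

theory Defs
  imports Complex_Main
begin

text \<open>A weighted graph on the vertex type 'a (vertex set = UNIV):
  adjacency relation E, weight mu.\<close>

definition weighted_graph :: "('a \<Rightarrow> 'a \<Rightarrow> bool) \<Rightarrow> ('a \<Rightarrow> 'a \<Rightarrow> real) \<Rightarrow> bool" where
  "weighted_graph E mu \<longleftrightarrow>
     infinite (UNIV :: 'a set)
   \<and> (\<forall>x. \<not> E x x)
   \<and> (\<forall>x y. E x y \<longleftrightarrow> E y x)
   \<and> (\<forall>x. finite {y. E x y})
   \<and> (\<forall>x y. E\<^sup>*\<^sup>* x y)
   \<and> (\<forall>x y. mu x y = mu y x)
   \<and> (\<forall>x y. mu x y \<ge> 0)
   \<and> (\<forall>x y. mu x y > 0 \<longleftrightarrow> E x y)"

definition vmeasure :: "('a \<Rightarrow> 'a \<Rightarrow> bool) \<Rightarrow> ('a \<Rightarrow> 'a \<Rightarrow> real) \<Rightarrow> 'a \<Rightarrow> real" where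
  "vmeasure E mu x = (\<Sum>y\<in>{y. E x y}. mu x y)"

definition cond_p0 :: "('a \<Rightarrow> 'a \<Rightarrow> bool) \<Rightarrow> ('a \<Rightarrow> 'a \<Rightarrow> real) \<Rightarrow> bool" where
  "cond_p0 E mu \<longleftrightarrow> (\<exists>p0::real. p0 > 1 \<and>
     (\<forall>x y. E x y \<longrightarrow> mu x y / vmeasure E mu x \<ge> 1 / p0))"

definition m_laplacian :: "('a \<Rightarrow> 'a \<Rightarrow> bool) \<Rightarrow> ('a \<Rightarrow> 'a \<Rightarrow> real) \<Rightarrow> real \<Rightarrow> ('a \<Rightarrow> real) \<Rightarrow> 'a \<Rightarrow> real" where
  "m_laplacian E mu m u x = (1 / vmeasure E mu x) *
     (\<Sum>y\<in>{y. E x y}. mu x y * \<bar>u y - u x\<bar> powr (m - 2) * (u y - u x))"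

definition grad_norm :: "('a \<Rightarrow> 'a \<Rightarrow> bool) \<Rightarrow> ('a \<Rightarrow> 'a \<Rightarrow> real) \<Rightarrow> ('a \<Rightarrow> real) \<Rightarrow> 'a \<Rightarrow> real" where
  "grad_norm E mu u x = sqrt (\<Sum>y\<in>{y. E x y}. mu x y / (2 * vmeasure E mu x) * (u y - u x)^2)"

text \<open>Power of the gradient with the conventions 0^0 = 1, 0^q = 0 for q > 0
  (for q < 0 and zero gradient the inequality is required to fail; see below).\<close>
definition gpow :: "real \<Rightarrow> real \<Rightarrow> real" where
  "gpow g q = (if g = 0 then (if q = 0 then 1 else 0) else g powr q)"

definition nontrivial_pos_solution ::
  "('a \<Rightarrow> 'a \<Rightarrow> bool) \<Rightarrow> ('a \<Rightarrow> 'a \<Rightarrow> real) \<Rightarrow> real \<Rightarrow> real \<Rightarrow> real \<Rightarrow> ('a \<Rightarrow> real) \<Rightarrow> bool" where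
  "nontrivial_pos_solution E mu m p q u \<longleftrightarrow>
     (\<forall>x. u x > 0)
   \<and> (\<exists>x y. u x \<noteq> u y)
   \<and> (\<forall>x. (q < 0 \<longrightarrow> grad_norm E mu u x \<noteq> 0)
        \<and> m_laplacian E mu m u x + u x powr p * gpow (grad_norm E mu u x) q \<le> 0)"

definition G6 :: "real \<Rightarrow> (real \<times> real) set" where
  "G6 m = {(p, q). p < m - 1 - q \<and> q < m - 1} \<union> {(m - 1, 0)}"

end

theory Submission
  imports Defs "HOL-Analysis.Convex"
begin

(*
  Let u be a solution and x a vertex where u is not locally constant. Since the m-Laplacian
  at x is nonpositive, u drops at some neighbour; let b > 0 be the largest drop, attained at y.
  Then Delta_m u(x) >= -b^(m-1), and condition (p0) bounds every increment of u at x by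
  p0^(1/(m-1)) b, so that |grad u(x)| is comparable to b. The inequality therefore forces
  b >= c u(x)^(p/(m-1-q)) with a constant c > 0 independent of x, and y is again a vertex
  where u is not locally constant. Iterating, u decreases by at least c u^r per step, where
  r = p/(m-1-q) < 1 for (p,q) in G6 minus its corner; then u^(1-r) decreases by a fixed
  amount per step (by concavity, after reducing to r >= 0), contradicting u > 0.
  At the corner (m-1, 0) we have c = 1 and r = 1, so a single step already gives u(y) <= 0.
*)

lemma concave_powr_tangent:
  fixes a b s :: real
  assumes "0 < s" "s \<le> 1" "0 < a" "0 < b"
  shows "b powr s \<le> a powr s + s * a powr (s - 1) * (b - a)"
proof -
  have young: "a powr (1 - s) * b powr s \<le> (1 - s) * a + s * b"
    using Youngs_inequality_0[of "1 - s" s a b] assms by simp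
  have "a powr (1 - s) * (a powr s + s * a powr (s - 1) * (b - a)) = (1 - s) * a + s * b"
    using assms by (simp add: algebra_simps powr_add[symmetric])
  with young have
    "a powr (1 - s) * b powr s \<le> a powr (1 - s) * (a powr s + s * a powr (s - 1) * (b - a))"
    by simp
  then show ?thesis
    using assms by (simp add: mult_le_cancel_left_pos)
qed

lemma no_uniform_descent:
  fixes W :: "'a \<Rightarrow> real"
  assumes "S \<noteq> {}" "\<forall>x\<in>S. 0 \<le> W x" "0 < d"
  shows "\<not> (\<forall>x\<in>S. \<exists>y\<in>S. W y \<le> W x - d)"
proof
  assume step: "\<forall>x\<in>S. \<exists>y\<in>S. W y \<le> W x - d"
  obtain x0 where "x0 \<in> S" using assms(1) by blast
  have descent: "\<exists>x\<in>S. W x \<le> W x0 - real n * d" for n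
  proof (induction n)
    case 0
    then show ?case using \<open>x0 \<in> S\<close> by auto
  next
    case (Suc n)
    then obtain x y where "x \<in> S" "W x \<le> W x0 - real n * d" "y \<in> S" "W y \<le> W x - d"
      using step by blast
    then show ?case by (intro bexI[of _ y]) (auto simp: algebra_simps)
  qed
  obtain n where "W x0 / d < real n" using reals_Archimedean2 by blast
  then have "W x0 < real n * d" using assms(3) by (simp add: field_simps)
  with descent[of n] assms(2) show False by force
qed

text \<open>By concavity, \<open>u powr (1 - r)\<close> drops by at least \<open>(1 - r) * c\<close> at every step.\<close>
lemma no_powr_descent_nonneg:
  fixes u :: "'a \<Rightarrow> real"
  assumes "S \<noteq> {}" "\<forall>x\<in>S. 0 < u x" "0 < c" "0 \<le> r" "r < 1"
  shows "\<not> (\<forall>x\<in>S. \<exists>y\<in>S. u y \<le> u x - c * u x powr r)"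
proof
  assume step: "\<forall>x\<in>S. \<exists>y\<in>S. u y \<le> u x - c * u x powr r"
  define t where "t = 1 - r"
  have t: "0 < t" "t \<le> 1" using assms unfolding t_def by auto
  have "\<forall>x\<in>S. \<exists>y\<in>S. u y powr t \<le> u x powr t - t * c"
  proof
    fix x assume "x \<in> S"
    then obtain y where y: "y \<in> S" "u y \<le> u x - c * u x powr r" using step by blast
    have "u y powr t \<le> u x powr t + t * u x powr (t - 1) * (u y - u x)"
      using concave_powr_tangent[OF t] assms(2) \<open>x \<in> S\<close> y(1) by blast
    also have "\<dots> \<le> u x powr t + t * u x powr (t - 1) * (- c * u x powr r)"
      using y(2) t by (intro add_left_mono mult_left_mono) auto
    also have "\<dots> = u x powr t - t * c"
      using assms(2) \<open>x \<in> S\<close> by (simp add: t_def powr_add[symmetric] less_imp_neq[symmetric])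
    finally show "\<exists>y\<in>S. u y powr t \<le> u x powr t - t * c"
      using y(1) by blast
  qed
  moreover have "\<not> (\<forall>x\<in>S. \<exists>y\<in>S. u y powr t \<le> u x powr t - t * c)"
    using t assms(3) by (intro no_uniform_descent[OF assms(1)]) auto
  ultimately show False by contradiction
qed

lemma no_powr_descent:
  fixes u :: "'a \<Rightarrow> real"
  assumes "S \<noteq> {}" "\<forall>x\<in>S. 0 < u x" "0 < c" "r < 1"
  shows "\<not> (\<forall>x\<in>S. \<exists>y\<in>S. u y \<le> u x - c * u x powr r)"
proof
  assume step: "\<forall>x\<in>S. \<exists>y\<in>S. u y \<le> u x - c * u x powr r"
  obtain x0 where "x0 \<in> S" using assms(1) by blast
  define r' where "r' = max r 0"
  define S' where "S' = {x\<in>S. u x \<le> u x0}"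
  define c' where "c' = c * u x0 powr (r - r')"
  have "\<forall>x\<in>S'. \<exists>y\<in>S'. u y \<le> u x - c' * u x powr r'"
  proof
    fix x assume "x \<in> S'"
    then have ux: "x \<in> S" "0 < u x" "u x \<le> u x0" using assms(2) unfolding S'_def by auto
    then obtain y where y: "y \<in> S" "u y \<le> u x - c * u x powr r"
      using step by blast
    have "u x0 powr (r - r') \<le> u x powr (r - r')"
      using ux by (intro powr_mono2') (auto simp: r'_def)
    then have "c' * u x powr r' \<le> c * (u x powr (r - r') * u x powr r')"
      using assms(3) unfolding c'_def by (simp add: mult_right_mono)
    also have "\<dots> = c * u x powr r"
      using ux by (simp add: powr_add[symmetric])
    finally have "c' * u x powr r' \<le> c * u x powr r" .
    moreover have "0 < c * u x powr r" using assms(3) ux by simp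
    ultimately show "\<exists>y\<in>S'. u y \<le> u x - c' * u x powr r'"
      using y ux unfolding S'_def by (intro bexI[of _ y]) auto
  qed
  moreover have "\<not> (\<forall>x\<in>S'. \<exists>y\<in>S'. u y \<le> u x - c' * u x powr r')"
    using assms \<open>x0 \<in> S\<close> unfolding S'_def c'_def r'_def by (intro no_powr_descent_nonneg) auto
  ultimately show False by contradiction
qed

lemma root_le_of_powr_le:
  fixes a b s q :: real
  assumes "0 < b" "0 < s" "0 \<le> a" "a * b powr q \<le> b powr (q + s)"
  shows "a powr (1 / s) \<le> b"
proof -
  have "a * b powr q \<le> b powr s * b powr q"
    using assms(4) by (simp add: powr_add mult.commute)
  then have "a \<le> b powr s" using assms(1) by simp
  then have "a powr (1 / s) \<le> (b powr s) powr (1 / s)"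
    using assms(2,3) by (intro powr_mono2) auto
  then show ?thesis using assms(1,2) by (simp add: powr_powr)
qed

definition signed_powr :: "real \<Rightarrow> real \<Rightarrow> real" where
  "signed_powr m t = \<bar>t\<bar> powr (m - 2) * t"

lemma signed_powr_pos: "0 < t \<Longrightarrow> signed_powr m t = t powr (m - 1)"
  using powr_mult_base[of t "m - 2"] by (simp add: signed_powr_def mult.commute)

lemma signed_powr_neg: "t < 0 \<Longrightarrow> signed_powr m t = - ((- t) powr (m - 1))"
  using powr_mult_base[of "- t" "m - 2"] by (simp add: signed_powr_def mult.commute)

lemma signed_powr_zero [simp]: "signed_powr m 0 = 0"
  by (simp add: signed_powr_def)

lemma signed_powr_mono:
  assumes "1 < m" "s \<le> t"
  shows "signed_powr m s \<le> signed_powr m t"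
proof -
  consider "s < 0" "t < 0" | "s \<le> 0" "0 \<le> t" | "0 < s" "0 < t"
    using assms by linarith
  then show ?thesis
  proof cases
    case 1
    then show ?thesis using assms by (simp add: signed_powr_neg powr_mono2)
  next
    case 2
    have "signed_powr m s \<le> 0" "0 \<le> signed_powr m t"
      using 2 by (simp_all add: signed_powr_def mult_nonneg_nonpos)
    then show ?thesis by linarith
  next
    case 3
    then show ?thesis using assms by (simp add: signed_powr_pos powr_mono2)
  qed
qed

lemma gpow_ge_min_powr:
  assumes "0 < lo" "lo \<le> g" "g \<le> hi"
  shows "min (lo powr q) (hi powr q) \<le> gpow g q"
proof (cases "0 \<le> q")
  case True
  then have "lo powr q \<le> g powr q" using assms by (intro powr_mono2) auto
  then show ?thesis using assms by (simp add: gpow_def)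
next
  case False
  then have "hi powr q \<le> g powr q" using assms by (intro powr_mono2') auto
  then show ?thesis using assms by (simp add: gpow_def)
qed

text \<open>If \<open>b > 0\<close> is the largest drop of \<open>u\<close> from \<open>x\<close> to a neighbour, then
  \<open>b / sqrt (2 * p0) \<le> |\<nabla>u(x)| \<le> p0 powr (1 / (m - 1)) * b / sqrt 2\<close>; raising the
  worse of the two factors to the power \<open>q\<close> gives the constant below.\<close>
definition gradient_const :: "real \<Rightarrow> real \<Rightarrow> real \<Rightarrow> real" where
  "gradient_const p0 m q =
     min ((1 / sqrt (2 * p0)) powr q) ((p0 powr (1 / (m - 1)) / sqrt 2) powr q)"

lemma gradient_const_pos: "1 < p0 \<Longrightarrow> 0 < gradient_const p0 m q"
  by (simp add: gradient_const_def)

lemma gradient_const_zero [simp]: "1 < p0 \<Longrightarrow> gradient_const p0 m 0 = 1"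
  by (simp add: gradient_const_def)

locale normalized_weights =
  fixes N :: "'a set" and w :: "'a \<Rightarrow> real" and p0 :: real
  assumes finite_N: "finite N"
    and p0_gt_1: "1 < p0"
    and weight_ge: "y \<in> N \<Longrightarrow> 1 / p0 \<le> w y"
    and sum_weights: "sum w N = 1"
begin

lemma weight_pos: "y \<in> N \<Longrightarrow> 0 < w y"
  using weight_ge[of y] p0_gt_1 by (smt (verit) divide_pos_pos)

lemma weight_nonneg: "y \<in> N \<Longrightarrow> 0 \<le> w y"
  using weight_pos[of y] by simp

lemma weighted_sum_signed_powr_ge:
  assumes "1 < m" "0 < b" "\<forall>y\<in>N. - b \<le> d y"
  shows "- (b powr (m - 1)) \<le> (\<Sum>y\<in>N. w y * signed_powr m (d y))"
proof -
  have "(\<Sum>y\<in>N. w y * signed_powr m (- b)) = sum w N * signed_powr m (- b)"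
    by (simp add: sum_distrib_right)
  then have "- (b powr (m - 1)) = (\<Sum>y\<in>N. w y * signed_powr m (- b))"
    using assms(2) by (simp add: signed_powr_neg sum_weights)
  also have "\<dots> \<le> (\<Sum>y\<in>N. w y * signed_powr m (d y))"
    using assms weight_nonneg by (intro sum_mono mult_left_mono signed_powr_mono) auto
  finally show ?thesis .
qed

lemma exists_neg_if_weighted_sum_signed_powr_nonpos:
  assumes "1 < m" "(\<Sum>y\<in>N. w y * signed_powr m (d y)) \<le> 0" "y \<in> N" "d y \<noteq> 0"
  shows "\<exists>z\<in>N. d z < 0"
proof (rule ccontr)
  assume "\<not> (\<exists>z\<in>N. d z < 0)"
  then have d_nonneg: "0 \<le> d z" if "z \<in> N" for z
    using that by (simp add: not_less)
  have nonneg: "0 \<le> w z * signed_powr m (d z)" if "z \<in> N" for z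
    using signed_powr_mono[OF assms(1) d_nonneg[OF that]] weight_nonneg[OF that] by simp
  have "0 < d y"
    using d_nonneg[OF assms(3)] assms(4) by linarith
  then have "0 < w y * signed_powr m (d y)"
    using weight_pos[OF assms(3)] by (simp add: signed_powr_pos)
  then have "0 < (\<Sum>y\<in>N. w y * signed_powr m (d y))"
    using nonneg by (intro sum_pos2[OF finite_N assms(3)]) auto
  with assms(2) show False by simp
qed

text \<open>Every term is at least \<open>- w z * b powr (m - 1)\<close> and the weights sum to \<open>1\<close>,
  so a nonpositive sum forces \<open>w y * d y powr (m - 1) \<le> b powr (m - 1)\<close>;
  then use \<open>1 / p0 \<le> w y\<close>.\<close>
lemma upper_bound_if_weighted_sum_signed_powr_nonpos:
  assumes "1 < m" "(\<Sum>y\<in>N. w y * signed_powr m (d y)) \<le> 0" "0 < b" "\<forall>z\<in>N. - b \<le> d z"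
    and "y \<in> N"
  shows "d y \<le> p0 powr (1 / (m - 1)) * b"
proof (cases "0 < d y")
  case True
  define B where "B = b powr (m - 1)"
  have shifted_nonneg: "0 \<le> w z * (signed_powr m (d z) + B)" if "z \<in> N" for z
    using signed_powr_mono[OF assms(1) assms(4)[rule_format, OF that]] weight_nonneg[OF that] assms(3)
    by (simp add: B_def signed_powr_neg)
  have "w y * (signed_powr m (d y) + B) \<le> (\<Sum>z\<in>N. w z * (signed_powr m (d z) + B))"
    using shifted_nonneg by (intro member_le_sum) (auto simp: finite_N assms(5))
  also have "\<dots> = (\<Sum>z\<in>N. w z * signed_powr m (d z)) + B"
    by (simp add: distrib_left sum.distrib sum_distrib_right[symmetric] sum_weights)
  finally have "w y * signed_powr m (d y) + w y * B \<le> B"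
    using assms(2) by (simp add: distrib_left)
  moreover have "0 \<le> w y * B"
    using weight_pos[OF assms(5)] by (simp add: B_def)
  ultimately have "w y * d y powr (m - 1) \<le> B"
    using True by (simp add: signed_powr_pos)
  then have "p0 * (w y * d y powr (m - 1)) \<le> p0 * B"
    using p0_gt_1 by simp
  moreover have "d y powr (m - 1) \<le> p0 * (w y * d y powr (m - 1))"
    using mult_right_mono[OF weight_ge[OF assms(5)], of "p0 * d y powr (m - 1)"] p0_gt_1
    by (simp add: field_simps)
  ultimately have "d y powr (m - 1) \<le> p0 * B"
    by linarith
  then have "(d y powr (m - 1)) powr (1 / (m - 1)) \<le> (p0 * B) powr (1 / (m - 1))"
    using assms(1) True by (intro powr_mono2) auto
  then show ?thesis
    using assms(1,3) True p0_gt_1 by (simp add: B_def powr_powr powr_mult)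
next
  case False
  moreover have "0 \<le> p0 powr (1 / (m - 1)) * b"
    using assms(3) by simp
  ultimately show ?thesis by linarith
qed

lemma sqrt_weighted_sum_squares_ge:
  assumes "y \<in> N"
  shows "\<bar>d y\<bar> / sqrt (2 * p0) \<le> sqrt (\<Sum>z\<in>N. w z / 2 * (d z)\<^sup>2)"
proof -
  have "(d y)\<^sup>2 / (2 * p0) \<le> w y / 2 * (d y)\<^sup>2"
    using mult_right_mono[OF weight_ge[OF assms], of "(d y)\<^sup>2 / 2"] by (simp add: field_simps)
  also have "\<dots> \<le> (\<Sum>z\<in>N. w z / 2 * (d z)\<^sup>2)"
    using weight_nonneg by (intro member_le_sum) (auto simp: finite_N assms)
  finally have "sqrt ((d y)\<^sup>2 / (2 * p0)) \<le> sqrt (\<Sum>z\<in>N. w z / 2 * (d z)\<^sup>2)"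
    by (rule real_sqrt_le_mono)
  then show ?thesis
    by (simp add: real_sqrt_divide)
qed

lemma sqrt_weighted_sum_squares_le:
  assumes "0 \<le> B" "\<forall>z\<in>N. \<bar>d z\<bar> \<le> B"
  shows "sqrt (\<Sum>z\<in>N. w z / 2 * (d z)\<^sup>2) \<le> B / sqrt 2"
proof -
  have "(d z)\<^sup>2 \<le> B\<^sup>2" if "z \<in> N" for z
    using power_mono[of "\<bar>d z\<bar>" B 2] assms that by simp
  then have "(\<Sum>z\<in>N. w z / 2 * (d z)\<^sup>2) \<le> (\<Sum>z\<in>N. w z / 2 * B\<^sup>2)"
    using weight_pos by (intro sum_mono mult_left_mono) (auto simp: less_imp_le)
  also have "\<dots> = B\<^sup>2 / 2"
    by (simp add: sum_distrib_right[symmetric] sum_divide_distrib[symmetric] sum_weights)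
  finally have "sqrt (\<Sum>z\<in>N. w z / 2 * (d z)\<^sup>2) \<le> sqrt (B\<^sup>2 / 2)"
    by (rule real_sqrt_le_mono)
  then show ?thesis
    using assms(1) by (simp add: real_sqrt_divide)
qed

lemma gradient_const_le_gpow:
  assumes "0 < b" "y \<in> N" "\<bar>d y\<bar> = b"
    and "\<forall>z\<in>N. \<bar>d z\<bar> \<le> p0 powr (1 / (m - 1)) * b"
  shows "gradient_const p0 m q * b powr q \<le> gpow (sqrt (\<Sum>z\<in>N. w z / 2 * (d z)\<^sup>2)) q"
proof -
  define K where "K = p0 powr (1 / (m - 1))"
  have lo: "b / sqrt (2 * p0) \<le> sqrt (\<Sum>z\<in>N. w z / 2 * (d z)\<^sup>2)"
    using sqrt_weighted_sum_squares_ge[OF assms(2), of d] assms(3) by simp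
  have hi: "sqrt (\<Sum>z\<in>N. w z / 2 * (d z)\<^sup>2) \<le> K * b / sqrt 2"
    using sqrt_weighted_sum_squares_le[of "K * b" d] assms(1,4) unfolding K_def by simp
  have "(b / sqrt (2 * p0)) powr q = (1 / sqrt (2 * p0)) powr q * b powr q"
    "(K * b / sqrt 2) powr q = (K / sqrt 2) powr q * b powr q"
    using assms(1) p0_gt_1 by (simp_all add: K_def powr_mult[symmetric])
  then have "gradient_const p0 m q * b powr q = min ((b / sqrt (2 * p0)) powr q) ((K * b / sqrt 2) powr q)"
    by (simp add: gradient_const_def K_def min_mult_distrib_right)
  also have "\<dots> \<le> gpow (sqrt (\<Sum>z\<in>N. w z / 2 * (d z)\<^sup>2)) q"
    using lo hi assms(1) p0_gt_1 by (intro gpow_ge_min_powr) auto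
  finally show ?thesis .
qed

lemma exists_large_drop:
  assumes m: "1 < m" and "0 \<le> a"
    and ineq: "(\<Sum>y\<in>N. w y * signed_powr m (d y))
                 + a * gpow (sqrt (\<Sum>y\<in>N. w y / 2 * (d y)\<^sup>2)) q \<le> 0"
    and "v \<in> N" "d v \<noteq> 0"
  obtains z where "z \<in> N" "d z < 0"
    "gradient_const p0 m q * a * (- d z) powr q \<le> (- d z) powr (m - 1)"
proof -
  define g where "g = sqrt (\<Sum>y\<in>N. w y / 2 * (d y)\<^sup>2)"
  have "0 \<le> a * gpow g q"
    using assms(2) by (simp add: gpow_def)
  then have sum_nonpos: "(\<Sum>y\<in>N. w y * signed_powr m (d y)) \<le> 0"
    using ineq unfolding g_def by linarith
  define z where "z = arg_min_on d N"
  have z: "z \<in> N" "\<forall>y\<in>N. d z \<le> d y"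
    using arg_min_if_finite[OF finite_N, of d] assms(4) unfolding z_def by (auto simp: not_less)
  define b where "b = - d z"
  have d_ge: "\<forall>y\<in>N. - b \<le> d y"
    using z(2) unfolding b_def by simp
  obtain y where "y \<in> N" "d y < 0"
    using exists_neg_if_weighted_sum_signed_powr_nonpos[OF m sum_nonpos assms(4,5)] by blast
  with z(2) have b_pos: "0 < b"
    unfolding b_def by fastforce
  have gpow_ge: "gradient_const p0 m q * b powr q \<le> gpow g q"
  proof -
    have "b \<le> p0 powr (1 / (m - 1)) * b"
      using p0_gt_1 m b_pos ge_one_powr_ge_zero[of p0 "1 / (m - 1)"] by simp
    then have "\<forall>y\<in>N. \<bar>d y\<bar> \<le> p0 powr (1 / (m - 1)) * b"
      using upper_bound_if_weighted_sum_signed_powr_nonpos[OF m sum_nonpos b_pos d_ge] d_ge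
      by (auto simp: abs_le_iff)
    moreover have "\<bar>d z\<bar> = b"
      using b_pos unfolding b_def by simp
    ultimately show ?thesis
      unfolding g_def using gradient_const_le_gpow[OF b_pos z(1)] by simp
  qed
  have "gradient_const p0 m q * a * b powr q = a * (gradient_const p0 m q * b powr q)"
    by (simp add: ac_simps)
  also have "\<dots> \<le> a * gpow g q"
    using gpow_ge assms(2) by (rule mult_left_mono)
  also have "\<dots> \<le> b powr (m - 1)"
    using ineq weighted_sum_signed_powr_ge[OF m b_pos d_ge] unfolding g_def by linarith
  finally show ?thesis
    using that z(1) b_pos unfolding b_def by simp
qed

end

lemma normalized_weights_neighbours:
  assumes "weighted_graph E mu" "1 < p0"
    and p0_bound: "\<forall>x y. E x y \<longrightarrow> 1 / p0 \<le> mu x y / vmeasure E mu x"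
    and "E x y0"
  shows "normalized_weights {y. E x y} (\<lambda>y. mu x y / vmeasure E mu x) p0"
proof
  show "finite {y. E x y}" using assms(1) unfolding weighted_graph_def by blast
  show "1 < p0" by fact
  show "1 / p0 \<le> mu x y / vmeasure E mu x" if "y \<in> {y. E x y}" for y
    using p0_bound that by blast
  have "1 / p0 \<le> mu x y0 / vmeasure E mu x"
    using p0_bound assms(4) by blast
  then have "vmeasure E mu x \<noteq> 0" using assms(2) by auto
  then show "(\<Sum>y\<in>{y. E x y}. mu x y / vmeasure E mu x) = 1"
    by (simp add: sum_divide_distrib[symmetric] vmeasure_def)
qed

lemma m_laplacian_eq_weighted_sum:
  "m_laplacian E mu m u x =
     (\<Sum>y\<in>{y. E x y}. mu x y / vmeasure E mu x * signed_powr m (u y - u x))"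
  unfolding m_laplacian_def signed_powr_def by (simp add: sum_distrib_left mult.assoc)

lemma grad_norm_eq_weighted_sum:
  "grad_norm E mu u x =
     sqrt (\<Sum>y\<in>{y. E x y}. mu x y / vmeasure E mu x / 2 * (u y - u x)\<^sup>2)"
  unfolding grad_norm_def by (simp add: mult.commute)

definition jump_set :: "('a \<Rightarrow> 'a \<Rightarrow> bool) \<Rightarrow> ('a \<Rightarrow> real) \<Rightarrow> 'a set" where
  "jump_set E u = {x. \<exists>y. E x y \<and> u y \<noteq> u x}"

lemma jump_set_nonempty:
  assumes "E\<^sup>*\<^sup>* a b" "u a \<noteq> u b"
  shows "jump_set E u \<noteq> {}"
  using assms
proof (induction rule: rtranclp_induct)
  case (step y z)
  show ?case
  proof (cases "u a = u y")
    case True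
    then have "u z \<noteq> u y" using step.prems by simp
    with step.hyps(2) have "y \<in> jump_set E u" unfolding jump_set_def by blast
    then show ?thesis by blast
  qed (use step in simp)
qed simp

lemma jump_set_descent:
  assumes wg: "weighted_graph E mu"
    and p0: "1 < p0" "\<forall>x y. E x y \<longrightarrow> 1 / p0 \<le> mu x y / vmeasure E mu x"
    and m: "1 < m" and s_pos: "0 < m - 1 - q"
    and sol: "m_laplacian E mu m u x + u x powr p * gpow (grad_norm E mu u x) q \<le> 0"
    and "x \<in> jump_set E u"
  shows "\<exists>y\<in>jump_set E u.
           u y \<le> u x - gradient_const p0 m q powr (1 / (m - 1 - q)) * u x powr (p / (m - 1 - q))"
proof -
  define C where "C = gradient_const p0 m q"
  define s where "s = m - 1 - q"
  obtain y0 where y0: "E x y0" "u y0 \<noteq> u x"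
    using \<open>x \<in> jump_set E u\<close> unfolding jump_set_def by blast
  interpret normalized_weights "{y. E x y}" "\<lambda>y. mu x y / vmeasure E mu x" p0
    using normalized_weights_neighbours[OF wg p0 y0(1)] .
  have "(\<Sum>y\<in>{y. E x y}. mu x y / vmeasure E mu x * signed_powr m (u y - u x))
      + u x powr p * gpow (sqrt (\<Sum>y\<in>{y. E x y}. mu x y / vmeasure E mu x / 2 * (u y - u x)\<^sup>2)) q
      \<le> 0"
    using sol unfolding m_laplacian_eq_weighted_sum grad_norm_eq_weighted_sum .
  then obtain y where y: "E x y" "u y - u x < 0"
    "C * u x powr p * (- (u y - u x)) powr q \<le> (- (u y - u x)) powr (m - 1)"
    using exists_large_drop[OF m, where a = "u x powr p" and d = "\<lambda>y. u y - u x" and v = y0] y0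
    unfolding C_def by auto
  have "E y x"
    using wg y(1) unfolding weighted_graph_def by blast
  with y(2) have "y \<in> jump_set E u"
    unfolding jump_set_def by force
  moreover have "(C * u x powr p) powr (1 / s) \<le> u x - u y"
    using root_le_of_powr_le[of "u x - u y" s "C * u x powr p" q] y(2,3) s_pos
      gradient_const_pos[OF p0(1), of m q]
    by (simp add: C_def s_def)
  moreover have "(C * u x powr p) powr (1 / s) = C powr (1 / s) * u x powr (p / s)"
    using gradient_const_pos[OF p0(1), of m q] by (simp add: C_def powr_mult powr_powr)
  ultimately show ?thesis
    unfolding C_def s_def by force
qed

theorem mainTheorem7:
  fixes E :: "'a \<Rightarrow> 'a \<Rightarrow> bool" and mu :: "'a \<Rightarrow> 'a \<Rightarrow> real"
    and m p q :: real
  assumes "weighted_graph E mu"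
    and "cond_p0 E mu"
    and "m > 1"
    and "(p, q) \<in> G6 m"
  shows "\<not> (\<exists>u. nontrivial_pos_solution E mu m p q u)"
proof
  assume "\<exists>u. nontrivial_pos_solution E mu m p q u"
  then obtain u a b where u_pos: "\<forall>x. 0 < u x" and "u a \<noteq> u b"
    and sol: "\<And>x. m_laplacian E mu m u x + u x powr p * gpow (grad_norm E mu u x) q \<le> 0"
    unfolding nontrivial_pos_solution_def by blast
  obtain p0 where p0: "1 < p0" "\<forall>x y. E x y \<longrightarrow> 1 / p0 \<le> mu x y / vmeasure E mu x"
    using assms(2) unfolding cond_p0_def by blast
  define s where "s = m - 1 - q"
  define c where "c = gradient_const p0 m q powr (1 / s)"
  have G6_cases: "(p = m - 1 \<and> q = 0) \<or> (p < s \<and> q < m - 1)"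
    using assms(4) unfolding G6_def s_def by auto
  then have "0 < s"
    using assms(3) unfolding s_def by auto
  have descent: "\<forall>x\<in>jump_set E u. \<exists>y\<in>jump_set E u. u y \<le> u x - c * u x powr (p / s)"
    using jump_set_descent[OF assms(1) p0 assms(3) \<open>0 < s\<close>[unfolded s_def] sol]
    unfolding c_def s_def by blast
  have "E\<^sup>*\<^sup>* a b"
    using assms(1) unfolding weighted_graph_def by blast
  then have "jump_set E u \<noteq> {}"
    using \<open>u a \<noteq> u b\<close> by (rule jump_set_nonempty)
  from G6_cases show False
  proof
    assume "p = m - 1 \<and> q = 0"
    then have "c * u x powr (p / s) = u x" for x
      using p0(1) \<open>0 < s\<close> u_pos[rule_format, of x] unfolding c_def s_def by simp
    then obtain y where "u y \<le> 0"
      using descent \<open>jump_set E u \<noteq> {}\<close> by fastforce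
    then show False
      using u_pos[rule_format, of y] by simp
  next
    assume "p < s \<and> q < m - 1"
    then have "p / s < 1"
      using \<open>0 < s\<close> by simp
    moreover have "0 < c"
      using gradient_const_pos[OF p0(1), of m q] unfolding c_def by simp
    ultimately show False
      using no_powr_descent[OF \<open>jump_set E u \<noteq> {}\<close>] u_pos descent by blast
  qed
qed

end
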